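(* Let $n\in\mathbb{N}$ and let $\Xi$ be the set of all finitely supported probability measures $\eta$ on $[-1,1]$ satisfying $\int x^\ell\,d\eta(x)=\frac12\int_{-1}^1x^\ell\,dx$ for $\ell=0,\dots,n$. For such $\eta$ let $u(\eta)=\min\{v\in\mathbb{R}^+:\mathrm{supp}\,\eta\subset[-v,v]\}$. Let $r=\lfloor n/2\rfloor+1$, let $x_1^*<\dots<x_r^*$ be the zeros of the Legendre polynomial $P_r(x)$ (orthogonal with respect to Lebesgue measure on $[-1,1]$). Then $$\min_{\eta\in\Xi}u(\eta)=|x_1^*|,$$ and the minimum is attained by the measure $\eta^*$ putting mass $w_i^*=\frac12\int_{-1}^1\ell_i(x)\,dx$ at $x_i^*$, $i=1,\dots,r$, where $\ell_i(x)=\prod_{j\ne i}\frac{x-x_j^*}{x_i^*-x_j^*}$ is the $i$-th Lagrange interpolation polynomial with nodes $x_1^*,\dots,x_r^*$. *)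

theory Defs
  imports "HOL-Probability.Probability" "HOL-Computational_Algebra.Polynomial"
begin

fun legendre :: "nat \<Rightarrow> real poly" where
  "legendre 0 = 1"
| "legendre (Suc 0) = [:0, 1:]"
| "legendre (Suc (Suc k)) =
     smult (1 / (real k + 2))
       (smult (2 * real k + 3) ([:0, 1:] * legendre (Suc k)) - smult (real k + 1) (legendre k))"

definition Xi :: "nat \<Rightarrow> real pmf set" where
  "Xi n = {p. finite (set_pmf p) \<and> set_pmf p \<subseteq> {-1..1} \<and>
     (\<forall>l\<le>n. measure_pmf.expectation p (\<lambda>x. x ^ l) = (1/2) * integral {-1..1} (\<lambda>x. x ^ l))}"

text \<open>u(eta) = min{v >= 0 : supp eta \<subseteq> [-v,v]} = max of |x| over the (finite, nonempty) support.\<close>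
definition u_supp :: "real pmf \<Rightarrow> real" where
  "u_supp p = Max (abs ` set_pmf p)"

definition legendre_zeros :: "nat \<Rightarrow> real set" where
  "legendre_zeros r = {x. poly (legendre r) x = 0}"

definition lagrange_basis :: "real set \<Rightarrow> real \<Rightarrow> real \<Rightarrow> real" where
  "lagrange_basis Z i x = (\<Prod>j\<in>Z - {i}. (x - j) / (i - j))"

definition gauss_weight :: "real set \<Rightarrow> real \<Rightarrow> real" where
  "gauss_weight Z i = (1/2) * integral {-1..1} (lagrange_basis Z i)"

end

theory Submission
  imports Defs
begin

text \<open>
  Gauss-Legendre quadrature with the r zeros of P_r as nodes is exact for polynomials of degree
  less than 2r and has positive weights. Hence the measure eta* carrying these weights matches the
  moments of the normalised Lebesgue measure up to degree 2r - 1 >= n, and its support radius is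
  |x_1*| because the zeros are symmetric about 0.

  Conversely, suppose a moment-matching eta had its support inside (x_1*, x_r*). Let
  h(x) = prod_{1<i<r} (x - x_i*)^2 and g(x) = (x - x_1*)(x - x_r*) h(x), a polynomial of degree
  2r - 2 <= n. Exactness of the quadrature gives  int g d eta = sum_i w_i g(x_i*) = 0  and
  int h d eta = sum_i w_i h(x_i*) >= w_1 h(x_1*) > 0. But g <= 0 on the support of eta, and g < 0
  wherever h > 0, so int g d eta < 0.

  The orthogonality of P_r to polynomials of lower degree, on which both the exactness of the
  quadrature and the location of the zeros rest, follows from a closed formula for the moments
  of the Legendre polynomials.
\<close>

section \<open>Legendre polynomials and their moments\<close>

lemma legendre_degree_lead_coeff: "degree (legendre k) = k \<and> 0 < coeff (legendre k) k"
proof (induction k rule: legendre.induct)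
  case (3 k)
  let ?P = "legendre (Suc (Suc k))"
  have "legendre (Suc k) \<noteq> 0"
    using 3 by auto
  then have "degree ([:0, 1:] * legendre (Suc k)) = Suc (Suc k)"
    using 3 by (simp add: degree_mult_eq)
  then have "degree ?P \<le> Suc (Suc k)"
    by (auto intro!: degree_diff_le order.trans[OF degree_smult_le] simp: 3)
  moreover have lead: "0 < coeff ?P (Suc (Suc k))"
    using 3 by (simp add: coeff_eq_0)
  then have "Suc (Suc k) \<le> degree ?P"
    by (metis le_degree order_less_irrefl)
  ultimately have "degree ?P = Suc (Suc k)"
    by (rule le_antisym)
  then show ?case
    using lead ..
qed simp_all

lemma degree_legendre [simp]: "degree (legendre k) = k"
  using legendre_degree_lead_coeff by blast

lemma legendre_nonzero [simp]: "legendre k \<noteq> 0"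
  using legendre_degree_lead_coeff[of k] by auto

lemma poly_legendre_minus: "poly (legendre k) (- x) = (-1) ^ k * poly (legendre k) x"
  by (induction k rule: legendre.induct) (auto simp: algebra_simps)

lemma has_integral_power_sym:
  "((\<lambda>x. x ^ m) has_integral (if even m then 2 / (m + 1) else 0)) {-1..1::real}"
proof -
  have "((\<lambda>x::real. x ^ (m + 1) / (m + 1)) has_real_derivative x ^ m) (at x within {-1..1})" for x
    by (rule derivative_eq_intros refl | simp)+
  then have "((\<lambda>x. x ^ m) has_integral (1 ^ (m + 1) / (m + 1) - (-1) ^ (m + 1) / (m + 1))) {-1..1::real}"
    by (intro fundamental_theorem_of_calculus) (auto simp: has_real_derivative_iff_has_vector_derivative)
  then show ?thesis
    by (auto simp: field_simps)
qed

text \<open>Closed form of the integral of x^m P_k(x) over [-1,1], see has_integral_power_mult_legendre.\<close>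
definition legendre_moment :: "nat \<Rightarrow> nat \<Rightarrow> real" where
  "legendre_moment k m =
     (if k \<le> m \<and> even (m - k)
      then 2 ^ (k + 1) * fact m * fact ((m + k) div 2) / (fact ((m - k) div 2) * fact (m + k + 1))
      else 0)"

lemma legendre_moment_offset:
  "legendre_moment k (k + 2 * j) * (fact j * fact (2 * k + 2 * j + 1)) =
     2 ^ (k + 1) * fact (k + 2 * j) * fact (k + j)"
proof -
  have "(k + 2 * j + k) div 2 = k + j" "k + 2 * j + k + 1 = 2 * k + 2 * j + 1"
    by simp_all
  then show ?thesis
    by (simp add: legendre_moment_def)
qed

lemma legendre_moment_diag:
  "legendre_moment k k * fact (2 * k + 1) = 2 ^ (k + 1) * fact k * fact k"
  using legendre_moment_offset[of k 0] by simp

lemma legendre_moment_diag_rec: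
  "(2 * real k + 3) * legendre_moment (k + 1) (k + 1) = (real k + 1) * legendre_moment k k"
proof -
  define A F F' where "A = (fact k :: real)" and "F = (fact (2 * (k + 1) + 1) :: real)"
    and "F' = (fact (2 * k + 1) :: real)"
  have "F \<noteq> 0"
    by (simp add: F_def)
  have F_eq: "F = (2 * real k + 3) * (2 * real k + 2) * F'"
    unfolding F_def F'_def by (simp add: algebra_simps)
  have "legendre_moment (k + 1) (k + 1) * F = 4 * 2 ^ k * ((real k + 1) * A) * ((real k + 1) * A)"
    using legendre_moment_diag[of "k + 1"] by (simp add: A_def F_def algebra_simps)
  then have moment_succ: "legendre_moment (k + 1) (k + 1) = 4 * 2 ^ k * ((real k + 1) * A) * ((real k + 1) * A) / F"
    using \<open>F \<noteq> 0\<close> by (simp add: eq_divide_eq)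
  have "legendre_moment k k * F = (2 * real k + 3) * (2 * real k + 2) * (2 * 2 ^ k * A * A)"
    using legendre_moment_diag[of k] by (simp add: A_def F'_def F_eq)
  then have moment: "legendre_moment k k = (2 * real k + 3) * (2 * real k + 2) * (2 * 2 ^ k * A * A) / F"
    using \<open>F \<noteq> 0\<close> by (simp add: eq_divide_eq)
  show ?thesis
    unfolding moment moment_succ by (simp add: field_simps)
qed

lemma legendre_moment_offset_rec:
  "(real k + 2) * legendre_moment (k + 2) (k + 2 + 2 * i) =
     (2 * real k + 3) * legendre_moment (k + 1) (k + 1 + 2 * (i + 1)) -
     (real k + 1) * legendre_moment k (k + 2 * (i + 1))"
proof -
  \<comment> \<open>Over the common denominator D each of the three moments is 2^k M K times a polynomial
    in k and i, so the recurrence reduces to a polynomial identity.\<close>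
  define M K I F F' where "M = (fact (k + 2 * i + 2) :: real)" and "K = (fact (k + i + 1) :: real)"
    and "I = (fact i :: real)" and "F = (fact (2 * k + 2 * i + 5) :: real)"
    and "F' = (fact (2 * k + 2 * i + 3) :: real)"
  have fact_eqs:
    "fact (k + 2 + 2 * i) = M" "fact (k + 2 + i) = (real k + real i + 2) * K"
    "fact (k + 1 + 2 * (i + 1)) = (real k + 2 * real i + 3) * M"
    "fact (k + 1 + (i + 1)) = (real k + real i + 2) * K"
    "fact (k + 2 * (i + 1)) = M" "fact (k + (i + 1)) = K"
    "fact (i + 1) = (real i + 1) * I" "fact i = I"
    "fact (2 * (k + 2) + 2 * i + 1) = F" "fact (2 * (k + 1) + 2 * (i + 1) + 1) = F"
    "fact (2 * k + 2 * (i + 1) + 1) = F'"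
    by (simp_all add: M_def K_def I_def F_def F'_def fact_Suc eval_nat_numeral algebra_simps)
  have F_eq: "F = (2 * real k + 2 * real i + 5) * (2 * real k + 2 * real i + 4) * F'"
    by (simp add: F_def F'_def fact_Suc eval_nat_numeral algebra_simps)
  define D where "D = (real i + 1) * I * F"
  have "D \<noteq> 0"
    by (simp add: D_def I_def F_def)
  have "legendre_moment (k + 2) (k + 2 + 2 * i) * (I * F) = 8 * 2 ^ k * M * ((real k + real i + 2) * K)"
    using legendre_moment_offset[of "k + 2" i] unfolding fact_eqs by (simp add: algebra_simps)
  then have moment_k2: "legendre_moment (k + 2) (k + 2 + 2 * i) =
      (real i + 1) * (8 * 2 ^ k * M * ((real k + real i + 2) * K)) / D"
    using \<open>D \<noteq> 0\<close> unfolding D_def by (simp add: eq_divide_eq ac_simps)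
  have "legendre_moment (k + 1) (k + 1 + 2 * (i + 1)) * D =
      4 * 2 ^ k * ((real k + 2 * real i + 3) * M) * ((real k + real i + 2) * K)"
    using legendre_moment_offset[of "k + 1" "i + 1"] unfolding fact_eqs D_def
    by (simp add: algebra_simps)
  then have moment_k1: "legendre_moment (k + 1) (k + 1 + 2 * (i + 1)) =
      4 * 2 ^ k * ((real k + 2 * real i + 3) * M) * ((real k + real i + 2) * K) / D"
    using \<open>D \<noteq> 0\<close> by (simp add: eq_divide_eq)
  have "legendre_moment k (k + 2 * (i + 1)) * ((real i + 1) * I * F') = 2 * 2 ^ k * M * K"
    using legendre_moment_offset[of k "i + 1"] unfolding fact_eqs by (simp add: algebra_simps)
  then have moment_k: "legendre_moment k (k + 2 * (i + 1)) =
      (2 * real k + 2 * real i + 5) * (2 * real k + 2 * real i + 4) * (2 * 2 ^ k * M * K) / D"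
    using \<open>D \<noteq> 0\<close> unfolding D_def F_eq by (simp add: eq_divide_eq ac_simps)
  show ?thesis
    unfolding moment_k moment_k1 moment_k2 using \<open>D \<noteq> 0\<close> by (simp add: field_simps)
qed

lemma legendre_moment_0: "legendre_moment 0 m = (if even m then 2 / (real m + 1) else 0)"
proof (cases "even m")
  case True
  then obtain j where m: "m = 0 + 2 * j"
    by auto
  define C where "C = (fact j * fact m :: real)"
  have "legendre_moment 0 m * (real m + 1) * C = 2 * C"
    using legendre_moment_offset[of 0 j] unfolding m C_def by (simp add: algebra_simps)
  moreover have "C \<noteq> 0"
    by (simp add: C_def)
  ultimately show ?thesis
    using True by (simp add: eq_divide_eq)
qed (simp add: legendre_moment_def)

lemma legendre_moment_1: "legendre_moment 1 m = legendre_moment 0 (m + 1)"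
proof (cases "even m")
  case False
  then obtain j where m: "m = 1 + 2 * j"
    by (metis add.commute oddE)
  define C where "C = (fact j * fact m * (2 * real j + 2) :: real)"
  have "legendre_moment 1 m * (2 * real j + 3) * C = 2 * C"
    using legendre_moment_offset[of 1 j] unfolding m C_def by (simp add: algebra_simps)
  moreover have "C \<noteq> 0"
    unfolding C_def by (simp add: add_nonneg_eq_0_iff)
  ultimately have "legendre_moment 1 m = 2 / (2 * real j + 3)"
    by (simp add: eq_divide_eq)
  then show ?thesis
    using False by (simp add: legendre_moment_0 m)
qed (simp add: legendre_moment_def)

lemma legendre_moment_rec:
  "(real k + 2) * legendre_moment (k + 2) m =
     (2 * real k + 3) * legendre_moment (k + 1) (m + 1) - (real k + 1) * legendre_moment k m"
proof -
  have "m < k \<or> odd (m - k) \<or> m = k \<or> (\<exists>i. m = k + 2 * (i + 1))"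
    by presburger
  then consider "m < k \<or> odd (m - k)" | "m = k" | i where "m = k + 2 * (i + 1)"
    by blast
  then show ?thesis
  proof cases
    case 1
    then have "legendre_moment (k + 2) m = 0" "legendre_moment (k + 1) (m + 1) = 0"
      "legendre_moment k m = 0"
      by (auto simp: legendre_moment_def)
    then show ?thesis
      by simp
  next
    case 2
    then show ?thesis
      using legendre_moment_diag_rec[of k] by (simp add: legendre_moment_def)
  next
    case 3
    then show ?thesis
      using legendre_moment_offset_rec[of k i] by (simp add: algebra_simps)
  qed
qed

lemma has_integral_power_mult_legendre:
  "((\<lambda>x. x ^ m * poly (legendre k) x) has_integral legendre_moment k m) {-1..1}"
proof (induction k arbitrary: m rule: legendre.induct)
  case 1
  show ?case
    using has_integral_power_sym[of m] by (simp add: legendre_moment_0)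
next
  case 2
  show ?case
    using has_integral_power_sym[of "Suc m"] legendre_moment_1[of m]
    by (simp add: legendre_moment_0 mult.commute)
next
  case (3 k)
  have "((\<lambda>x. 1 / (real k + 2) * ((2 * real k + 3) * (x ^ (m + 1) * poly (legendre (k + 1)) x)
               - (real k + 1) * (x ^ m * poly (legendre k) x)))
        has_integral 1 / (real k + 2) * ((2 * real k + 3) * legendre_moment (k + 1) (m + 1)
               - (real k + 1) * legendre_moment k m)) {-1..1}"
    by (intro has_integral_diff has_integral_mult_right 3[unfolded Suc_eq_plus1])
  moreover have "1 / (real k + 2) * ((2 * real k + 3) * legendre_moment (k + 1) (m + 1)
      - (real k + 1) * legendre_moment k m) = legendre_moment (k + 2) m"
    using legendre_moment_rec[of k m] by (simp add: field_simps)
  ultimately show ?case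
    by (simp add: algebra_simps)
qed

lemma legendre_orthogonal:
  assumes "degree q < k"
  shows "((\<lambda>x. poly (legendre k) x * poly q x) has_integral 0) {-1..1}"
proof -
  have "((\<lambda>x. \<Sum>i\<le>degree q. coeff q i * (x ^ i * poly (legendre k) x)) has_integral
          (\<Sum>i\<le>degree q. coeff q i * legendre_moment k i)) {-1..1}"
    by (intro has_integral_sum has_integral_mult_right has_integral_power_mult_legendre) auto
  moreover have "legendre_moment k i = 0" if "i \<le> degree q" for i
    using that assms by (simp add: legendre_moment_def)
  moreover have "poly (legendre k) x * poly q x =
      (\<Sum>i\<le>degree q. coeff q i * (x ^ i * poly (legendre k) x))" for x
    by (simp add: poly_altdef[of q] sum_distrib_left mult_ac)
  ultimately show ?thesis
    by simp
qed

section \<open>The zeros of the Legendre polynomials\<close>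

lemma poly_nonneg_has_integral_0_imp_0:
  fixes h :: "real poly"
  assumes "a < b" and "(poly h has_integral 0) {a..b}" and "\<forall>x\<in>{a<..<b}. 0 \<le> poly h x"
  shows "h = 0"
proof (rule ccontr)
  assume "h \<noteq> 0"
  have "continuous_on {a..b} (poly h)"
    by (intro continuous_intros)
  then have "poly h x = 0" if "x \<in> {a..b}" for x
    using has_integral_0_cbox_imp_0[of a b "poly h" x] assms that by auto
  then have "{a..b} \<subseteq> {x. poly h x = 0}"
    by blast
  then have "finite {a..b}"
    using poly_roots_finite[OF \<open>h \<noteq> 0\<close>] by (rule finite_subset)
  with infinite_Icc[OF \<open>a < b\<close>] show False
    by contradiction
qed

lemma order_linear_factor: "order z [:-y, 1:] = (if z = y then 1 else 0)" for y z :: "'a :: idom"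
  using order_power_n_n[of y 1] by (auto intro: order_0I)

lemma order_prod_linear_factors:
  fixes S :: "'a :: idom set"
  assumes "finite S"
  shows "order z (\<Prod>y\<in>S. [:-y, 1:]) = (if z \<in> S then 1 else 0)"
  using assms
proof (induction S rule: finite_induct)
  case empty
  then show ?case
    by simp
next
  case (insert a S)
  have "(\<Prod>y\<in>insert a S. [:-y, 1:]) \<noteq> 0"
    using insert.hyps(1) by (subst prod_zero_iff) auto
  then have "order z (\<Prod>y\<in>insert a S. [:-y, 1:]) = order z [:-a, 1:] + order z (\<Prod>y\<in>S. [:-y, 1:])"
    unfolding prod.insert[OF insert.hyps] by (rule order_mult)
  then show ?case
    using insert by (simp add: order_linear_factor)
qed

lemma poly_constant_sign_if_even_orders:
  fixes h :: "real poly"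
  assumes "h \<noteq> 0" and "\<forall>y\<in>{a<..<b}. even (order y h)"
  shows "(\<forall>x\<in>{a<..<b}. 0 \<le> poly h x) \<or> (\<forall>x\<in>{a<..<b}. poly h x \<le> 0)"
  using assms
proof (induction "degree h" arbitrary: h rule: less_induct)
  case less
  show ?case
  proof (cases "\<exists>y\<in>{a<..<b}. poly h y = 0")
    case True
    then obtain y where y: "y \<in> {a<..<b}" "poly h y = 0"
      by blast
    then have "order y h \<noteq> 0" and "even (order y h)"
      using less.prems order_root by blast+
    then have "[:-y, 1:] ^ 2 dvd h"
      using order_divides by fastforce
    then obtain g where g: "h = [:-y, 1:] ^ 2 * g"
      by (elim dvdE)
    with less.prems have "g \<noteq> 0"
      by auto
    then have "degree g < degree h"
      using g by (simp add: degree_mult_eq degree_power_eq)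
    moreover have "\<forall>z\<in>{a<..<b}. even (order z g)"
    proof
      fix z assume "z \<in> {a<..<b}"
      then have "even (order z ([:-y, 1:] ^ 2) + order z g)"
        using less.prems g order_mult by metis
      moreover have "even (order z ([:-y, 1:] ^ 2))"
        using order_power_n_n[of y 2] by (cases "z = y") (auto simp: order_0I)
      ultimately show "even (order z g)"
        by simp
    qed
    ultimately have "(\<forall>x\<in>{a<..<b}. 0 \<le> poly g x) \<or> (\<forall>x\<in>{a<..<b}. poly g x \<le> 0)"
      using less.hyps \<open>g \<noteq> 0\<close> by blast
    moreover have "poly h x = (x - y) ^ 2 * poly g x" for x
      using g by (simp add: power2_eq_square algebra_simps)
    ultimately show ?thesis
      by (auto intro: mult_nonneg_nonneg mult_nonneg_nonpos)
  next
    case False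
    show ?thesis
    proof (rule ccontr)
      assume "\<not> ?thesis"
      then obtain x1 x2 where x: "x1 \<in> {a<..<b}" "x2 \<in> {a<..<b}" "poly h x1 < 0" "0 < poly h x2"
        by (auto simp: not_le)
      then have "x1 \<noteq> x2"
        by auto
      with x have "min x1 x2 < max x1 x2" and "poly h (min x1 x2) * poly h (max x1 x2) < 0"
        by (auto simp: min_def max_def mult_neg_pos mult_pos_neg)
      then obtain x where "min x1 x2 < x" "x < max x1 x2" "poly h x = 0"
        using poly_IVT by blast
      with x False show False
        by (auto simp: min_less_iff_disj less_max_iff_disj)
    qed
  qed
qed

lemma finite_legendre_zeros: "finite (legendre_zeros r)"
  unfolding legendre_zeros_def by (rule poly_roots_finite) simp

lemma uminus_mem_legendre_zeros: "z \<in> legendre_zeros r \<Longrightarrow> - z \<in> legendre_zeros r"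
  unfolding legendre_zeros_def by (simp add: poly_legendre_minus)

lemma card_legendre_sign_changes:
  "r \<le> card {y \<in> {-1<..<1}. odd (order y (legendre r))}" (is "_ \<le> card ?S")
proof (rule ccontr)
  \<comment> \<open>Otherwise P_r times the product q of its sign-change factors would have constant sign
    on (-1,1), yet integral 0 by orthogonality.\<close>
  assume "\<not> r \<le> card ?S"
  have "?S \<subseteq> legendre_zeros r"
    unfolding legendre_zeros_def by (auto simp: order_root elim: oddE)
  then have "finite ?S"
    using finite_legendre_zeros by (rule finite_subset)
  define q where "q = (\<Prod>y\<in>?S. [:-y, 1:])"
  have "degree q \<le> card ?S"
    unfolding q_def using degree_prod_sum_le[OF \<open>finite ?S\<close>, of "\<lambda>y. [:-y, 1:]"] by (simp add: o_def)
  with \<open>\<not> r \<le> card ?S\<close> have "degree q < r"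
    by simp
  then have int0: "(poly (legendre r * q) has_integral 0) {-1..1}"
    unfolding poly_mult[abs_def] by (rule legendre_orthogonal)
  have "q \<noteq> 0"
    unfolding q_def using \<open>finite ?S\<close> by (subst prod_zero_iff) auto
  then have nz: "legendre r * q \<noteq> 0"
    by simp
  have "even (order y (legendre r * q))" if "y \<in> {-1<..<1}" for y
    using that nz \<open>finite ?S\<close> by (simp add: order_mult q_def order_prod_linear_factors)
  then consider "\<forall>x\<in>{-1<..<1}. 0 \<le> poly (legendre r * q) x"
    | "\<forall>x\<in>{-1<..<1}. 0 \<le> poly (- (legendre r * q)) x"
    using poly_constant_sign_if_even_orders[OF nz] by fastforce
  then show False
  proof cases
    case 1
    have "legendre r * q = 0"
      by (rule poly_nonneg_has_integral_0_imp_0[OF _ int0 1]) simp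
    with nz show False ..
  next
    case 2
    have "(poly (- (legendre r * q)) has_integral 0) {-1..1}"
      using has_integral_neg[OF int0] by (simp add: poly_minus[abs_def])
    then have "- (legendre r * q) = 0"
      by (rule poly_nonneg_has_integral_0_imp_0[OF _ _ 2, rotated]) simp
    with nz show False
      by simp
  qed
qed

lemma legendre_zeros_eq_sign_changes:
  "legendre_zeros r = {y \<in> {-1<..<1}. odd (order y (legendre r))}" (is "?Z = ?S")
proof (rule card_subset_eq[symmetric])
  show "finite ?Z"
    by (rule finite_legendre_zeros)
  show "?S \<subseteq> ?Z"
    unfolding legendre_zeros_def by (auto simp: order_root elim: oddE)
  have "card ?Z \<le> r"
    using card_poly_roots_bound[of "legendre r"] by (simp add: legendre_zeros_def)
  then show "card ?S = card ?Z"
    using card_legendre_sign_changes[of r] card_mono[OF \<open>finite ?Z\<close> \<open>?S \<subseteq> ?Z\<close>] by simp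
qed

lemma legendre_zeros_subset: "legendre_zeros r \<subseteq> {-1<..<1}"
  unfolding legendre_zeros_eq_sign_changes by blast

lemma card_legendre_zeros: "card (legendre_zeros r) = r"
proof (rule antisym)
  show "card (legendre_zeros r) \<le> r"
    using card_poly_roots_bound[of "legendre r"] by (simp add: legendre_zeros_def)
  show "r \<le> card (legendre_zeros r)"
    using card_legendre_sign_changes[of r] by (simp add: legendre_zeros_eq_sign_changes)
qed

lemma legendre_zeros_nonempty: "0 < r \<Longrightarrow> legendre_zeros r \<noteq> {}"
  using card_legendre_zeros[of r] by auto

section \<open>Lagrange interpolation and Gauss-Legendre quadrature\<close>

definition lagrange_basis_poly :: "real set \<Rightarrow> real \<Rightarrow> real poly" where
  "lagrange_basis_poly Z i = (\<Prod>j\<in>Z - {i}. smult (1 / (i - j)) [:-j, 1:])"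

lemma poly_lagrange_basis_poly: "poly (lagrange_basis_poly Z i) = lagrange_basis Z i"
  unfolding lagrange_basis_poly_def lagrange_basis_def poly_prod
  by (intro ext prod.cong) (simp_all add: divide_inverse algebra_simps)

lemma degree_lagrange_basis_poly:
  assumes "finite Z" and "i \<in> Z"
  shows "degree (lagrange_basis_poly Z i) < card Z"
proof -
  have "degree (lagrange_basis_poly Z i) \<le> (\<Sum>j\<in>Z - {i}. 1)"
    unfolding lagrange_basis_poly_def using assms(1)
    by (intro order.trans[OF degree_prod_sum_le sum_mono]) auto
  also have "\<dots> < card Z"
    using assms card_gt_0_iff[of Z] by (auto simp: card_Diff_singleton)
  finally show ?thesis .
qed

lemma lagrange_basis_at_node:
  assumes "finite Z" and "i \<in> Z" and "y \<in> Z"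
  shows "lagrange_basis Z i y = (if y = i then 1 else 0)"
  unfolding lagrange_basis_def using assms by (auto simp: prod_zero_iff intro: prod.neutral)

lemma lagrange_interpolation:
  assumes "finite Z" and "degree t < card Z"
  shows "poly t x = (\<Sum>i\<in>Z. poly t i * lagrange_basis Z i x)"
proof -
  define L where "L = (\<Sum>i\<in>Z. smult (poly t i) (lagrange_basis_poly Z i))"
  have poly_L: "poly L x = (\<Sum>i\<in>Z. poly t i * lagrange_basis Z i x)" for x
    unfolding L_def poly_sum by (simp add: poly_lagrange_basis_poly)
  have "degree (smult (poly t i) (lagrange_basis_poly Z i)) < card Z" if "i \<in> Z" for i
    using degree_smult_le degree_lagrange_basis_poly[OF assms(1) that] by (rule order.strict_trans1)
  then have "degree L < card Z"
    unfolding L_def using assms(2) by (intro degree_sum_less) auto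
  moreover have "poly L y = poly t y" if "y \<in> Z" for y
  proof -
    have "poly L y = (\<Sum>i\<in>Z. if i = y then poly t y else 0)"
      unfolding poly_L using assms(1) that by (intro sum.cong) (auto simp: lagrange_basis_at_node)
    then show ?thesis
      using assms(1) that by simp
  qed
  ultimately have "L = t"
    using assms(2) by (intro poly_eqI_degree[of Z]) simp_all
  then show ?thesis
    unfolding poly_L[symmetric] by simp
qed

lemma lagrange_basis_integrable_on_interval: "lagrange_basis Z i integrable_on {a..b}"
  unfolding poly_lagrange_basis_poly[symmetric] by (intro integrable_continuous_interval continuous_intros)

lemma gauss_legendre_quadrature:
  fixes f :: "real poly"
  assumes "degree f < 2 * r"
  defines "Z \<equiv> legendre_zeros r"
  shows "(1/2) * integral {-1..1} (poly f) = (\<Sum>z\<in>Z. gauss_weight Z z * poly f z)"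
proof -
  define P where "P = legendre r"
  define s t where "s = f div P" and "t = f mod P"
  have f_eq: "f = s * P + t"
    by (simp add: s_def t_def)
  have "degree t < r"
    using degree_mod_less[of P f] assms(1) by (auto simp: P_def t_def)
  have "degree s < r"
  proof (cases "s = 0")
    case False
    have "degree s + r = degree (f - t)"
      using False by (simp add: f_eq P_def degree_mult_eq)
    also have "\<dots> < 2 * r"
      using assms(1) \<open>degree t < r\<close> degree_diff_le_max[of f t] by linarith
    finally show ?thesis
      by simp
  qed (use assms(1) in simp)
  have "poly t z = poly f z" if "z \<in> Z" for z
    using that by (simp add: f_eq Z_def P_def legendre_zeros_def)
  have t_interp: "poly t = (\<lambda>x. \<Sum>z\<in>Z. poly t z * lagrange_basis Z z x)"
    using \<open>degree t < r\<close>
    by (intro ext lagrange_interpolation) (simp_all add: Z_def finite_legendre_zeros card_legendre_zeros)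
  have "integral {-1..1} (poly f) = integral {-1..1} (\<lambda>x. poly P x * poly s x + poly t x)"
    by (intro arg_cong[where f = "integral {-1..1}"] ext) (simp add: f_eq)
  also have "\<dots> = integral {-1..1} (\<lambda>x. poly P x * poly s x) + integral {-1..1} (poly t)"
    by (intro integral_add integrable_continuous_interval continuous_intros)
  also have "integral {-1..1} (\<lambda>x. poly P x * poly s x) = 0"
    unfolding P_def using legendre_orthogonal[OF \<open>degree s < r\<close>] by (rule integral_unique)
  also have "integral {-1..1} (poly t) = (\<Sum>z\<in>Z. poly f z * integral {-1..1} (lagrange_basis Z z))"
    using \<open>\<And>z. z \<in> Z \<Longrightarrow> poly t z = poly f z\<close> finite_legendre_zeros[of r]
    by (subst t_interp) (simp add: Z_def integral_sum integrable_on_mult_right lagrange_basis_integrable_on_interval)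
  finally show ?thesis
    by (simp add: gauss_weight_def sum_distrib_left mult_ac)
qed

lemma gauss_weight_pos:
  assumes "z \<in> legendre_zeros r"
  shows "0 < gauss_weight (legendre_zeros r) z"
proof -
  define Z where "Z = legendre_zeros r"
  define l where "l = lagrange_basis_poly Z z"
  have "finite Z" "card Z = r" "z \<in> Z"
    using assms by (simp_all add: Z_def finite_legendre_zeros card_legendre_zeros)
  have l_nodes: "poly l y = (if y = z then 1 else 0)" if "y \<in> Z" for y
    using that \<open>finite Z\<close> \<open>z \<in> Z\<close> by (simp add: l_def poly_lagrange_basis_poly lagrange_basis_at_node)
  have "degree (l ^ 2) < 2 * r"
    using degree_power_le[of l 2] degree_lagrange_basis_poly[OF \<open>finite Z\<close> \<open>z \<in> Z\<close>] \<open>card Z = r\<close>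
    by (simp add: l_def)
  then have "(1/2) * integral {-1..1} (poly (l ^ 2)) = (\<Sum>y\<in>Z. gauss_weight Z y * poly (l ^ 2) y)"
    unfolding Z_def by (rule gauss_legendre_quadrature)
  also have "\<dots> = (\<Sum>y\<in>Z. if y = z then gauss_weight Z z else 0)"
    by (intro sum.cong) (auto simp: l_nodes)
  also have "\<dots> = gauss_weight Z z"
    using \<open>finite Z\<close> \<open>z \<in> Z\<close> by simp
  finally have weight_eq: "gauss_weight Z z = (1/2) * integral {-1..1} (poly (l ^ 2))" ..
  have integrable: "poly (l ^ 2) integrable_on {-1..1}"
    by (intro integrable_continuous_interval continuous_intros)
  have "0 \<le> integral {-1..1} (poly (l ^ 2))"
    using integrable by (rule integral_nonneg) simp
  moreover have "integral {-1..1} (poly (l ^ 2)) \<noteq> 0"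
  proof
    assume "integral {-1..1} (poly (l ^ 2)) = 0"
    with integrable have "(poly (l ^ 2) has_integral 0) {-1..1}"
      using integrable_integral by fastforce
    then have "l ^ 2 = 0"
      by (rule poly_nonneg_has_integral_0_imp_0[rotated]) simp_all
    with l_nodes[OF \<open>z \<in> Z\<close>] show False
      by simp
  qed
  ultimately show ?thesis
    unfolding Z_def[symmetric] weight_eq by simp
qed

lemma sum_gauss_weight:
  assumes "0 < r"
  shows "(\<Sum>z\<in>legendre_zeros r. gauss_weight (legendre_zeros r) z) = 1"
  using gauss_legendre_quadrature[of 1 r] assms by (simp add: poly_1[abs_def])

section \<open>Moment-matching measures\<close>

lemma expectation_poly_eq_Xi_integral:
  assumes "p \<in> Xi n" and "degree f \<le> n"
  shows "measure_pmf.expectation p (poly f) = (1/2) * integral {-1..1} (poly f)"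
proof -
  have "finite (set_pmf p)"
    using assms(1) by (simp add: Xi_def)
  have "measure_pmf.expectation p (poly f) =
      (\<Sum>i\<le>degree f. coeff f i * measure_pmf.expectation p (\<lambda>x. x ^ i))"
    unfolding poly_altdef using \<open>finite (set_pmf p)\<close>
    by (subst Bochner_Integration.integral_sum) (simp_all add: integrable_measure_pmf_finite)
  also have "\<dots> = (\<Sum>i\<le>degree f. coeff f i * ((1/2) * integral {-1..1} (\<lambda>x. x ^ i)))"
    using assms by (intro sum.cong refl) (simp add: Xi_def)
  also have "\<dots> = (1/2) * integral {-1..1} (poly f)"
    unfolding poly_altdef
    by (subst integral_sum) (auto intro!: integrable_continuous_interval continuous_intros simp: sum_distrib_left mult_ac)
  finally show ?thesis .
qed

lemma
  fixes w :: "'a \<Rightarrow> real"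
  assumes "finite Z" and "\<And>z. z \<in> Z \<Longrightarrow> 0 < w z" and "sum w Z = 1"
  defines "v \<equiv> \<lambda>x. if x \<in> Z then w x else 0"
  shows pmf_embed_pmf_finite_weights: "pmf (embed_pmf v) x = v x"
    and set_embed_pmf_finite_weights: "set_pmf (embed_pmf v) = Z"
proof -
  have v_nonneg: "0 \<le> v x" for x
    using assms(2) by (simp add: v_def less_imp_le)
  have "(\<integral>\<^sup>+x. ennreal (v x) \<partial>count_space UNIV) = (\<Sum>x\<in>Z. ennreal (w x))"
    using assms(1) by (subst nn_integral_count_space') (auto simp: v_def)
  also have "\<dots> = 1"
    using assms(2,3) by (simp add: sum_ennreal less_imp_le)
  finally have v_sum: "(\<integral>\<^sup>+x. ennreal (v x) \<partial>count_space UNIV) = 1" .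
  show "pmf (embed_pmf v) x = v x"
    by (rule pmf_embed_pmf[OF v_nonneg v_sum])
  show "set_pmf (embed_pmf v) = Z"
    unfolding set_embed_pmf[OF v_nonneg v_sum] using assms(2) by (auto simp: v_def less_imp_neq[symmetric])
qed

lemma support_reaches_extreme_nodes:
  fixes Z :: "real set" and w :: "real \<Rightarrow> real" and p :: "real pmf"
  assumes "finite Z" and "Z \<noteq> {}" and w_pos: "\<And>z. z \<in> Z \<Longrightarrow> 0 < w z"
    and "finite (set_pmf p)"
    and exact: "\<And>f. degree f + 2 \<le> 2 * card Z \<Longrightarrow>
                  measure_pmf.expectation p (poly f) = (\<Sum>z\<in>Z. w z * poly f z)"
  shows "\<exists>x\<in>set_pmf p. x \<le> Min Z \<or> Max Z \<le> x"
proof (rule ccontr)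
  define m M S where "m = Min Z" and "M = Max Z" and "S = set_pmf p"
  assume "\<not> (\<exists>x\<in>set_pmf p. x \<le> Min Z \<or> Max Z \<le> x)"
  then have inside: "m < x \<and> x < M" if "x \<in> S" for x
    using that by (auto simp: m_def M_def S_def not_le)
  have "m \<in> Z" "M \<in> Z"
    using assms(1,2) by (simp_all add: m_def M_def)
  have "m < M"
    using inside set_pmf_not_empty[of p] by (force simp: S_def)
  have "2 \<le> card Z"
    using card_mono[OF assms(1), of "{m, M}"] \<open>m \<in> Z\<close> \<open>M \<in> Z\<close> \<open>m < M\<close> by simp
  define Z' where "Z' = Z - {m, M}"
  have "finite Z'" and card_Z': "card Z' + 2 = card Z"
    using assms(1) \<open>m \<in> Z\<close> \<open>M \<in> Z\<close> \<open>m < M\<close> \<open>2 \<le> card Z\<close>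
    by (simp_all add: Z'_def card_Diff_subset_Int)
  define h where "h = (\<Prod>z\<in>Z'. [:-z, 1:] ^ 2)"
  define g where "g = [:-m, 1:] * [:-M, 1:] * h"
  have poly_h: "poly h x = (\<Prod>z\<in>Z'. (x - z) ^ 2)" for x
    by (simp add: h_def poly_prod)
  have poly_g: "poly g x = (x - m) * (x - M) * poly h x" for x
    by (simp add: g_def algebra_simps)
  have h_nonneg: "0 \<le> poly h x" for x
    unfolding poly_h by (intro prod_nonneg) simp
  have "degree h \<le> (\<Sum>z\<in>Z'. 2)"
    unfolding h_def using \<open>finite Z'\<close>
    by (intro order.trans[OF degree_prod_sum_le sum_mono]) (auto simp: degree_linear_power)
  then have deg_h: "degree h + 2 \<le> 2 * card Z" and deg_g: "degree g + 2 \<le> 2 * card Z"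
    using card_Z' degree_mult_le[of "[:-m, 1:] * [:-M, 1:]" h] degree_mult_le[of "[:-m, 1:]" "[:-M, 1:]"]
    by (simp_all add: g_def)
  have expectation_S: "measure_pmf.expectation p f = (\<Sum>x\<in>S. f x * pmf p x)" for f :: "real \<Rightarrow> real"
    using assms(4) by (intro integral_measure_pmf_real) (simp_all add: S_def)
  have "poly g z = 0" if "z \<in> Z" for z
    using that \<open>finite Z'\<close> by (cases "z \<in> Z'") (auto simp: poly_g poly_h Z'_def)
  then have "measure_pmf.expectation p (poly g) = 0"
    using exact[OF deg_g] by simp
  moreover have expectation_h_pos: "0 < measure_pmf.expectation p (poly h)"
  proof -
    have "m \<notin> Z'"
      by (simp add: Z'_def)
    then have "0 < poly h m"
      unfolding poly_h by (intro prod_pos) auto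
    then have "0 < w m * poly h m"
      using w_pos[OF \<open>m \<in> Z\<close>] by simp
    also have "\<dots> \<le> (\<Sum>z\<in>Z. w z * poly h z)"
      using assms(1) \<open>m \<in> Z\<close> w_pos h_nonneg by (intro member_le_sum) (auto intro: mult_nonneg_nonneg less_imp_le)
    finally show ?thesis
      using exact[OF deg_h] by simp
  qed
  have "\<exists>x\<in>S. poly h x \<noteq> 0"
  proof (rule ccontr)
    assume "\<not> (\<exists>x\<in>S. poly h x \<noteq> 0)"
    then have "measure_pmf.expectation p (poly h) = 0"
      by (simp add: expectation_S)
    with expectation_h_pos show False
      by simp
  qed
  then obtain x where "x \<in> S" and "0 < poly h x"
    using h_nonneg by (metis order.not_eq_order_implies_strict)
  have factor_neg: "(y - m) * (y - M) < 0" if "y \<in> S" for y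
    using inside[OF that] by (simp add: mult_pos_neg)
  have "0 < (\<Sum>y\<in>S. - (poly g y * pmf p y))"
  proof (rule sum_pos2)
    show "finite S" "x \<in> S"
      using assms(4) \<open>x \<in> S\<close> by (simp_all add: S_def)
    show "0 < - (poly g x * pmf p x)"
      using factor_neg[OF \<open>x \<in> S\<close>] \<open>0 < poly h x\<close> pmf_positive[of x p] \<open>x \<in> S\<close>
      by (simp add: S_def poly_g mult_neg_pos)
    show "0 \<le> - (poly g y * pmf p y)" if "y \<in> S" for y
    proof -
      have "poly g y \<le> 0"
        using mult_nonpos_nonneg[OF less_imp_le[OF factor_neg[OF that]] h_nonneg[of y]]
        by (simp add: poly_g)
      then show ?thesis
        by (simp add: mult_nonpos_nonneg)
    qed
  qed
  ultimately show False
    by (simp add: expectation_S sum_negf)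
qed

definition gauss_pmf :: "nat \<Rightarrow> real pmf" where
  "gauss_pmf r = embed_pmf (\<lambda>x. if x \<in> legendre_zeros r then gauss_weight (legendre_zeros r) x else 0)"

lemma
  assumes "0 < r"
  shows pmf_gauss_pmf:
      "pmf (gauss_pmf r) x = (if x \<in> legendre_zeros r then gauss_weight (legendre_zeros r) x else 0)"
    and set_pmf_gauss_pmf: "set_pmf (gauss_pmf r) = legendre_zeros r"
  using pmf_embed_pmf_finite_weights set_embed_pmf_finite_weights
    finite_legendre_zeros gauss_weight_pos sum_gauss_weight[OF assms]
  unfolding gauss_pmf_def by metis+

lemma expectation_gauss_pmf:
  assumes "0 < r"
  shows "measure_pmf.expectation (gauss_pmf r) f =
           (\<Sum>z\<in>legendre_zeros r. gauss_weight (legendre_zeros r) z * f z)"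
  using assms
  by (subst integral_measure_pmf_real[of "legendre_zeros r"])
     (auto simp: finite_legendre_zeros set_pmf_gauss_pmf pmf_gauss_pmf mult.commute intro!: sum.cong)

lemma gauss_pmf_in_Xi:
  assumes "n < 2 * r"
  shows "gauss_pmf r \<in> Xi n"
  unfolding Xi_def
proof (intro CollectI conjI allI impI)
  have "0 < r"
    using assms by simp
  then show "finite (set_pmf (gauss_pmf r))" "set_pmf (gauss_pmf r) \<subseteq> {-1..1}"
    using legendre_zeros_subset[of r] by (auto simp: set_pmf_gauss_pmf finite_legendre_zeros)
  fix l assume "l \<le> n"
  then have "(1/2) * integral {-1..1} (poly (monom 1 l)) =
      (\<Sum>z\<in>legendre_zeros r. gauss_weight (legendre_zeros r) z * poly (monom 1 l) z)"
    using assms by (intro gauss_legendre_quadrature) (simp add: degree_monom_eq)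
  then show "measure_pmf.expectation (gauss_pmf r) (\<lambda>x. x ^ l) = (1/2) * integral {-1..1} (\<lambda>x. x ^ l)"
    using \<open>0 < r\<close> by (simp add: expectation_gauss_pmf poly_monom[abs_def])
qed

lemma Max_legendre_zeros:
  assumes "0 < r"
  shows "Max (legendre_zeros r) = - Min (legendre_zeros r)"
proof (rule Max_eqI)
  from assms have "legendre_zeros r \<noteq> {}"
    by (rule legendre_zeros_nonempty)
  then show "- Min (legendre_zeros r) \<in> legendre_zeros r"
    using finite_legendre_zeros by (intro uminus_mem_legendre_zeros Min_in)
  show "y \<le> - Min (legendre_zeros r)" if "y \<in> legendre_zeros r" for y
    using Min_le[OF finite_legendre_zeros uminus_mem_legendre_zeros[OF that]] by simp
qed (rule finite_legendre_zeros)

lemma Min_legendre_zeros_nonpos: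
  assumes "0 < r"
  shows "Min (legendre_zeros r) \<le> 0"
proof -
  from assms have "legendre_zeros r \<noteq> {}"
    by (rule legendre_zeros_nonempty)
  then have "Min (legendre_zeros r) \<le> Max (legendre_zeros r)"
    using finite_legendre_zeros by (intro Min_le Max_in)
  then show ?thesis
    using Max_legendre_zeros[OF assms] by simp
qed

lemma abs_le_u_supp: "finite (set_pmf p) \<Longrightarrow> x \<in> set_pmf p \<Longrightarrow> \<bar>x\<bar> \<le> u_supp p"
  unfolding u_supp_def by simp

lemma u_supp_gauss_pmf:
  assumes "0 < r"
  shows "u_supp (gauss_pmf r) = \<bar>Min (legendre_zeros r)\<bar>"
  unfolding u_supp_def set_pmf_gauss_pmf[OF assms]
proof (rule Max_eqI)
  from assms have "legendre_zeros r \<noteq> {}"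
    by (rule legendre_zeros_nonempty)
  then show "\<bar>Min (legendre_zeros r)\<bar> \<in> abs ` legendre_zeros r"
    using finite_legendre_zeros by simp
  show "y \<le> \<bar>Min (legendre_zeros r)\<bar>" if "y \<in> abs ` legendre_zeros r" for y
    using that Min_le[OF finite_legendre_zeros] Max_ge[OF finite_legendre_zeros]
      Max_legendre_zeros[OF assms] Min_legendre_zeros_nonpos[OF assms]
    by fastforce
qed (simp add: finite_legendre_zeros)

lemma u_supp_lower_bound:
  assumes "p \<in> Xi n" and "0 < r" and "2 * r \<le> n + 2"
  shows "\<bar>Min (legendre_zeros r)\<bar> \<le> u_supp p"
proof -
  define Z where "Z = legendre_zeros r"
  have "finite (set_pmf p)"
    using assms(1) by (simp add: Xi_def)
  have "Z \<noteq> {}"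
    unfolding Z_def using assms(2) by (rule legendre_zeros_nonempty)
  have "\<exists>x\<in>set_pmf p. x \<le> Min Z \<or> Max Z \<le> x"
  proof (rule support_reaches_extreme_nodes)
    show "finite Z" "\<And>z. z \<in> Z \<Longrightarrow> 0 < gauss_weight Z z"
      by (simp_all add: Z_def finite_legendre_zeros gauss_weight_pos)
    show "measure_pmf.expectation p (poly f) = (\<Sum>z\<in>Z. gauss_weight Z z * poly f z)"
      if "degree f + 2 \<le> 2 * card Z" for f
    proof -
      have "degree f \<le> n" "degree f < 2 * r"
        using that assms(3) by (simp_all add: Z_def card_legendre_zeros)
      show ?thesis
        unfolding Z_def expectation_poly_eq_Xi_integral[OF assms(1) \<open>degree f \<le> n\<close>]
        using \<open>degree f < 2 * r\<close> by (rule gauss_legendre_quadrature)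
    qed
  qed fact+
  then obtain x where "x \<in> set_pmf p" and "\<bar>Min Z\<bar> \<le> \<bar>x\<bar>"
    using Max_legendre_zeros[OF assms(2)] Min_legendre_zeros_nonpos[OF assms(2)]
    unfolding Z_def by fastforce
  with abs_le_u_supp[OF \<open>finite (set_pmf p)\<close>] show ?thesis
    unfolding Z_def by fastforce
qed

theorem lemmaA1:
  fixes n :: nat
  defines "r \<equiv> n div 2 + 1"
  defines "Z \<equiv> legendre_zeros r"
  shows "(\<forall>p\<in>Xi n. \<bar>Min Z\<bar> \<le> u_supp p) \<and>
         (\<exists>q. (\<forall>x. pmf q x = (if x \<in> Z then gauss_weight Z x else 0)) \<and>
              q \<in> Xi n \<and> u_supp q = \<bar>Min Z\<bar>)"
proof (intro conjI ballI exI[of _ "gauss_pmf r"] allI)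
  have "0 < r" "2 * r \<le> n + 2" "n < 2 * r"
    by (simp_all add: r_def)
  show "\<bar>Min Z\<bar> \<le> u_supp p" if "p \<in> Xi n" for p
    unfolding Z_def using that \<open>0 < r\<close> \<open>2 * r \<le> n + 2\<close> by (rule u_supp_lower_bound)
  show "pmf (gauss_pmf r) x = (if x \<in> Z then gauss_weight Z x else 0)" for x
    unfolding Z_def using \<open>0 < r\<close> by (rule pmf_gauss_pmf)
  show "gauss_pmf r \<in> Xi n"
    using \<open>n < 2 * r\<close> by (rule gauss_pmf_in_Xi)
  show "u_supp (gauss_pmf r) = \<bar>Min Z\<bar>"
    unfolding Z_def using \<open>0 < r\<close> by (rule u_supp_gauss_pmf)
qed

end
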